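(* In the setting of the directed balloon graph with parameters $(d,b)$ (with $d\ge2$, $b\ge1$, edge weight $\gamma>0$, loop weight $-\nu<0$, driver node $v_0$, target node $v_d$), the Gramian entry satisfies $$\lim_{t\to\infty}W_{v_d,v_d}(t)=\frac{b^2}{2\nu}\left(\frac{\gamma}{2\nu}\right)^{2d}\frac{(2d)!}{(d!)^2},$$ and hence, for fixed $\beta$, $$\frac{\beta^2}{2}\lim_{t\to\infty}\frac{1}{W_{v_d,v_d}(t)}=\frac{\beta^2}{2}\,\frac{2\nu}{b^2}\left(\frac{2\nu}{\gamma}\right)^{2d}\frac{(d!)^2}{(2d)!}.$$
   Context: Directed balloon graph with parameters $(d,b)$: two end nodes $v_0$ and $v_d$ and $b$ pairwise internally disjoint directed paths from $v_0$ to $v_d$, each of length $d$. Weighted adjacency matrix $A$: $A_{j,k}=\gamma$ if there is an edge from node $k$ to node $j$, $A_{j,j}=-\nu$ for every node, other entries $0$. $B=\mathbf{e}_{v_0}$. $W(t)$ is the solution of $\dot W=AW+WA^T+BB^T$, $W(0)=0$. $\beta\in\mathbb{R}$ is a fixed scalar (the output displacement $y_f-\mathbf{e}_{v_d}^Te^{At_f}\mathbf{x}_0$). *)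

theory Defs
  imports "HOL-Analysis.Analysis"
begin

text \<open>Nodes of the directed balloon graph with parameters (d,b):
  Src is v_0, Tgt is v_d, and Mid i k (i < b, 1 \<le> k \<le> d-1) is the k-th
  internal node of the i-th path.\<close>

datatype node = Src | Tgt | Mid nat nat

definition balloon_nodes :: "nat \<Rightarrow> nat \<Rightarrow> node set" where
  "balloon_nodes d b = {Src, Tgt} \<union> {Mid i k | i k. i < b \<and> 1 \<le> k \<and> k \<le> d - 1}"

text \<open>Directed edges: the i-th path is
  Src \<rightarrow> Mid i 1 \<rightarrow> ... \<rightarrow> Mid i (d-1) \<rightarrow> Tgt (length d).\<close>

definition pos :: "nat \<Rightarrow> node \<Rightarrow> nat" where
  "pos d v = (case v of Src \<Rightarrow> 0 | Tgt \<Rightarrow> d | Mid i k \<Rightarrow> k)"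

definition path_of :: "node \<Rightarrow> nat \<Rightarrow> bool" where
  "path_of v i = (case v of Src \<Rightarrow> True | Tgt \<Rightarrow> True | Mid i' k \<Rightarrow> i' = i)"

definition balloon_edge :: "nat \<Rightarrow> nat \<Rightarrow> node \<Rightarrow> node \<Rightarrow> bool" where
  "balloon_edge d b u v \<longleftrightarrow> u \<in> balloon_nodes d b \<and> v \<in> balloon_nodes d b \<and>
     (\<exists>i<b. path_of u i \<and> path_of v i \<and> pos d v = pos d u + 1)"

definition balloon_A :: "nat \<Rightarrow> nat \<Rightarrow> real \<Rightarrow> real \<Rightarrow> node \<Rightarrow> node \<Rightarrow> real" where
  "balloon_A d b \<gamma> \<nu> j k =
     (if j = k then - \<nu> else if balloon_edge d b k j then \<gamma> else 0)"

definition driver_B :: "node \<Rightarrow> real" where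
  "driver_B j = (if j = Src then 1 else 0)"

definition is_gramian_solution ::
  "nat \<Rightarrow> nat \<Rightarrow> real \<Rightarrow> real \<Rightarrow> (real \<Rightarrow> node \<Rightarrow> node \<Rightarrow> real) \<Rightarrow> bool" where
  "is_gramian_solution d b \<gamma> \<nu> W \<longleftrightarrow>
     (\<forall>j\<in>balloon_nodes d b. \<forall>k\<in>balloon_nodes d b.
        W 0 j k = 0 \<and>
        (\<forall>t\<ge>0. ((\<lambda>s. W s j k) has_real_derivative
            ((\<Sum>l\<in>balloon_nodes d b. balloon_A d b \<gamma> \<nu> j l * W t l k)
             + (\<Sum>l\<in>balloon_nodes d b. W t j l * balloon_A d b \<gamma> \<nu> k l)
             + driver_B j * driver_B k)) (at t within {0..})))"

end

theory Submission imports Defs begin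

text \<open>The impulse response g(s) = e^{As} B of the balloon graph is explicit: since
  A = -\<nu> I + \<gamma> N with N nilpotent and N^p B counting the paths of length p out of v_0,
  its v_d entry is b (\<gamma> s)^d / d! e^{-\<nu> s}.  The integral of g g^T from 0 to t solves the
  Lyapunov equation, and because A is triangular with respect to the distance from v_0 that
  solution is unique, so W_{v_d,v_d}(t) is a multiple of the integral of s^{2d} e^{-2\<nu> s} over
  [0,t], which tends to (2d)! / (2\<nu>)^{2d+1}.\<close>

definition lyapunov_solution ::
  "'a set \<Rightarrow> ('a \<Rightarrow> 'a \<Rightarrow> real) \<Rightarrow> ('a \<Rightarrow> real) \<Rightarrow> (real \<Rightarrow> 'a \<Rightarrow> 'a \<Rightarrow> real) \<Rightarrow> bool" where
  "lyapunov_solution N A B W \<longleftrightarrow>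
     (\<forall>j\<in>N. \<forall>k\<in>N. W 0 j k = 0 \<and>
        (\<forall>t\<ge>0. ((\<lambda>s. W s j k) has_real_derivative
            (\<Sum>l\<in>N. A j l * W t l k) + (\<Sum>l\<in>N. W t j l * A k l) + B j * B k)
          (at t within {0..})))"

lemma vanishes_if_deriv_proportional:
  fixes f :: "real \<Rightarrow> real"
  assumes deriv: "\<And>t. t \<ge> 0 \<Longrightarrow> (f has_real_derivative c * f t) (at t within {0..})"
    and "f 0 = 0" and "t \<ge> 0"
  shows "f t = 0"
proof -
  define E where "E s = exp (- c * s) * f s" for s
  have "(E has_real_derivative 0) (at s within {0..})" if "s \<in> {0..}" for s
  proof -
    have "(E has_real_derivative exp (- c * s) * (- c) * f s + c * f s * exp (- c * s))
            (at s within {0..})"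
      unfolding E_def[abs_def] using that
      by (intro DERIV_mult deriv) (auto intro!: derivative_eq_intros)
    then show ?thesis by (simp add: algebra_simps)
  qed
  then obtain C where "\<forall>s\<in>{0..}. E s = C"
    using has_field_derivative_zero_constant[of "{0..}" E] by auto
  then have "E t = E 0" using \<open>t \<ge> 0\<close> by simp
  then show ?thesis using \<open>f 0 = 0\<close> by (simp add: E_def)
qed

lemma integral_Icc_has_real_derivative:
  fixes g :: "real \<Rightarrow> real"
  assumes "continuous_on UNIV g" and "t \<ge> 0"
  shows "((\<lambda>t. integral {0..t} g) has_real_derivative g t) (at t within {0..})"
proof -
  have "at t within {0..} = at t within {0..t+1}"
    by (rule at_within_nhd[where S="{..<t+1}"]) auto
  moreover have "((\<lambda>t. integral {0..t} g) has_real_derivative g t) (at t within {0..t+1})"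
    using assms by (intro integral_has_real_derivative continuous_on_subset[OF assms(1)]) auto
  ultimately show ?thesis by simp
qed

text \<open>The defect of the Lyapunov equation has derivative zero and vanishes at 0.\<close>

lemma lyapunov_solution_Gramian:
  assumes "finite N"
    and g_deriv: "\<And>v s. v \<in> N \<Longrightarrow> (g v has_real_derivative (\<Sum>l\<in>N. A v l * g l s)) (at s)"
    and g_0: "\<And>v. v \<in> N \<Longrightarrow> g v 0 = B v"
  shows "lyapunov_solution N A B (\<lambda>t j k. integral {0..t} (\<lambda>s. g j s * g k s))"
proof -
  define u where "u t j k = integral {0..t} (\<lambda>s. g j s * g k s)" for t j k
  have u_deriv: "((\<lambda>t. u t j k) has_real_derivative g j t * g k t) (at t within {0..})"
    if "j \<in> N" "k \<in> N" "t \<ge> 0" for j k t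
  proof -
    have "continuous_on UNIV (g v)" if "v \<in> N" for v
      using g_deriv[OF that] by (meson DERIV_isCont continuous_at_imp_continuous_on)
    then show ?thesis
      unfolding u_def using that by (intro integral_Icc_has_real_derivative continuous_intros)
  qed
  have "(\<Sum>l\<in>N. A j l * u t l k) + (\<Sum>l\<in>N. u t j l * A k l) + B j * B k = g j t * g k t"
    if j: "j \<in> N" and k: "k \<in> N" and t: "t \<ge> 0" for j k t
  proof -
    define R where "R t = (\<Sum>l\<in>N. A j l * u t l k) + (\<Sum>l\<in>N. u t j l * A k l) + B j * B k
      - g j t * g k t" for t
    have "(R has_real_derivative 0 * R x) (at x within {0..})" if x: "x \<ge> 0" for x
    proof -
      have "((\<lambda>t. \<Sum>l\<in>N. A j l * u t l k) has_real_derivative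
          (\<Sum>l\<in>N. A j l * (g l x * g k x))) (at x within {0..})"
        using k x by (intro DERIV_sum DERIV_cmult u_deriv) auto
      moreover have "((\<lambda>t. \<Sum>l\<in>N. u t j l * A k l) has_real_derivative
          (\<Sum>l\<in>N. g j x * g l x * A k l)) (at x within {0..})"
        using j x by (intro DERIV_sum DERIV_cmult_right u_deriv) auto
      moreover have "((\<lambda>t. g j t * g k t) has_real_derivative
          g j x * (\<Sum>l\<in>N. A k l * g l x) + (\<Sum>l\<in>N. A j l * g l x) * g k x) (at x within {0..})"
        by (rule DERIV_mult'; rule has_field_derivative_at_within, rule g_deriv) (use j k in auto)
      ultimately have "(R has_real_derivative
            (\<Sum>l\<in>N. A j l * (g l x * g k x)) + (\<Sum>l\<in>N. g j x * g l x * A k l) + 0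
          - (g j x * (\<Sum>l\<in>N. A k l * g l x) + (\<Sum>l\<in>N. A j l * g l x) * g k x))
          (at x within {0..})"
        unfolding R_def[abs_def] by (intro DERIV_diff DERIV_add DERIV_const)
      moreover have "(\<Sum>l\<in>N. A j l * (g l x * g k x)) + (\<Sum>l\<in>N. g j x * g l x * A k l)
          = (\<Sum>l\<in>N. A j l * g l x) * g k x + g j x * (\<Sum>l\<in>N. A k l * g l x)"
        by (simp add: sum_distrib_left sum_distrib_right mult_ac)
      ultimately show ?thesis by simp
    qed
    moreover have "R 0 = 0" using j k by (simp add: R_def u_def g_0)
    ultimately have "R t = 0" using vanishes_if_deriv_proportional t by blast
    then show ?thesis by (simp add: R_def)
  qed
  then show ?thesis
    using u_deriv unfolding lyapunov_solution_def u_def by simp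
qed

text \<open>No general ODE uniqueness theorem is needed when A is triangular with respect to a rank r:
  the difference of two solutions satisfies, entry by entry in order of increasing rank,
  a scalar linear equation with zero initial value.\<close>

lemma lyapunov_solution_unique:
  fixes r :: "'a \<Rightarrow> nat"
  assumes "finite N"
    and triangular: "\<And>j l. j \<in> N \<Longrightarrow> l \<in> N \<Longrightarrow> l \<noteq> j \<Longrightarrow> A j l \<noteq> 0 \<Longrightarrow> r l < r j"
    and W: "lyapunov_solution N A B W" and V: "lyapunov_solution N A B V"
    and "j \<in> N" "k \<in> N" "t \<ge> 0"
  shows "W t j k = V t j k"
  using assms(5-7)
proof (induction "r j + r k" arbitrary: j k t rule: less_induct)
  case less
  define D where "D s = W s j k - V s j k" for s
  have row: "(\<Sum>l\<in>N. A j l * W s l k) - (\<Sum>l\<in>N. A j l * V s l k) = A j j * D s"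
    if "s \<ge> 0" for s
  proof -
    have "(\<Sum>l\<in>N - {j}. A j l * (W s l k - V s l k)) = 0"
    proof (intro sum.neutral ballI)
      fix l assume "l \<in> N - {j}"
      then show "A j l * (W s l k - V s l k) = 0"
        using less.hyps[of l k s] triangular[of j l] \<open>s \<ge> 0\<close> less.prems by fastforce
    qed
    then have "(\<Sum>l\<in>N. A j l * (W s l k - V s l k)) = A j j * D s"
      using \<open>finite N\<close> less.prems by (simp add: sum.remove[of N j] D_def)
    then show ?thesis by (simp add: sum_subtractf right_diff_distrib)
  qed
  have column: "(\<Sum>l\<in>N. W s j l * A k l) - (\<Sum>l\<in>N. V s j l * A k l) = A k k * D s"
    if "s \<ge> 0" for s
  proof -
    have "(\<Sum>l\<in>N - {k}. (W s j l - V s j l) * A k l) = 0"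
    proof (intro sum.neutral ballI)
      fix l assume "l \<in> N - {k}"
      then show "(W s j l - V s j l) * A k l = 0"
        using less.hyps[of j l s] triangular[of k l] \<open>s \<ge> 0\<close> less.prems by fastforce
    qed
    then have "(\<Sum>l\<in>N. (W s j l - V s j l) * A k l) = A k k * D s"
      using \<open>finite N\<close> less.prems by (simp add: sum.remove[of N k] D_def)
    then show ?thesis by (simp add: sum_subtractf left_diff_distrib)
  qed
  have "(D has_real_derivative (A j j + A k k) * D s) (at s within {0..})" if "s \<ge> 0" for s
  proof -
    have "(D has_real_derivative
        ((\<Sum>l\<in>N. A j l * W s l k) + (\<Sum>l\<in>N. W s j l * A k l) + B j * B k)
      - ((\<Sum>l\<in>N. A j l * V s l k) + (\<Sum>l\<in>N. V s j l * A k l) + B j * B k)) (at s within {0..})"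
      unfolding D_def[abs_def] using W V less.prems \<open>s \<ge> 0\<close>
      by (intro DERIV_diff) (auto simp: lyapunov_solution_def)
    then show ?thesis
      using row[OF that] column[OF that] by (simp add: algebra_simps)
  qed
  moreover have "D 0 = 0"
    using W V less.prems by (simp add: D_def lyapunov_solution_def)
  ultimately have "D t = 0"
    using vanishes_if_deriv_proportional less.prems by blast
  then show ?case by (simp add: D_def)
qed

definition poisson_cdf :: "nat \<Rightarrow> real \<Rightarrow> real" where
  "poisson_cdf k x = (\<Sum>n\<le>k. x ^ n / fact n) * exp (- x)"

lemma poisson_cdf_at_0 [simp]: "poisson_cdf k 0 = 1"
  by (simp add: poisson_cdf_def power_0_left if_distrib[where f="\<lambda>x. x / a" for a] sum.If_cases)

lemma poisson_cdf_has_real_derivative: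
  "(poisson_cdf k has_real_derivative - (x ^ k / fact k * exp (- x))) (at x)"
proof (induction k)
  case 0
  show ?case unfolding poisson_cdf_def by (auto intro!: derivative_eq_intros)
next
  case (Suc k)
  have "poisson_cdf (Suc k) = (\<lambda>x. poisson_cdf k x + x ^ Suc k / fact (Suc k) * exp (- x))"
    by (simp add: poisson_cdf_def fun_eq_iff algebra_simps)
  moreover have "((\<lambda>x. x ^ Suc k / fact (Suc k) * exp (- x)) has_real_derivative
      real (Suc k) * x ^ k / fact (Suc k) * exp (- x) - x ^ Suc k / fact (Suc k) * exp (- x)) (at x)"
    by (auto intro!: derivative_eq_intros simp del: fact_Suc power_Suc of_nat_Suc simp: field_simps)
  moreover have "real (Suc k) * x ^ k / fact (Suc k) = x ^ k / fact k"
    by (simp add: fact_Suc del: of_nat_Suc)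
  ultimately show ?case
    using DERIV_add[OF Suc.IH] by fastforce
qed

lemma poisson_cdf_tendsto_0: "(poisson_cdf k \<longlongrightarrow> 0) at_top"
proof -
  have "poisson_cdf k = (\<lambda>x. \<Sum>n\<le>k. x ^ n / exp x / fact n)"
    by (simp add: fun_eq_iff poisson_cdf_def sum_distrib_left sum_distrib_right exp_minus
        divide_inverse mult_ac)
  moreover have "((\<lambda>x::real. \<Sum>n\<le>k. x ^ n / exp x / fact n) \<longlongrightarrow> (\<Sum>n\<le>k. 0 / fact n)) at_top"
    by (intro tendsto_sum tendsto_divide[OF tendsto_power_div_exp_0 tendsto_const]) simp
  ultimately show ?thesis by simp
qed

lemma has_integral_power_mult_exp:
  fixes a t :: real
  assumes "a > 0" and "t \<ge> 0"
  shows "((\<lambda>s. s ^ n * exp (- a * s)) has_integral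
           fact n / a ^ (n + 1) * (1 - poisson_cdf n (a * t))) {0..t}"
proof -
  define F where "F x = - (fact n / a ^ (n + 1) * poisson_cdf n (a * x))" for x
  have "((\<lambda>s. s ^ n * exp (- a * s)) has_integral F t - F 0) {0..t}"
  proof (rule fundamental_theorem_of_calculus[OF \<open>t \<ge> 0\<close>])
    fix x
    have "(F has_real_derivative
        - (fact n / a ^ (n + 1) * (- ((a * x) ^ n / fact n * exp (- (a * x))) * a))) (at x)"
      unfolding F_def[abs_def]
      by (intro DERIV_minus DERIV_cmult DERIV_chain2[OF poisson_cdf_has_real_derivative])
        (auto intro!: derivative_eq_intros)
    moreover have "- (fact n / a ^ (n + 1) * (- ((a * x) ^ n / fact n * exp (- (a * x))) * a))
        = x ^ n * exp (- a * x)"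
      using \<open>a > 0\<close> by (simp add: power_mult_distrib field_simps)
    ultimately show "(F has_vector_derivative x ^ n * exp (- a * x)) (at x within {0..t})"
      by (simp add: has_real_derivative_iff_has_vector_derivative[symmetric]
          has_field_derivative_at_within)
  qed
  then show ?thesis by (simp add: F_def right_diff_distrib)
qed

lemma integral_power_mult_exp_tendsto:
  fixes a :: real
  assumes "a > 0"
  shows "((\<lambda>t. integral {0..t} (\<lambda>s. s ^ n * exp (- a * s))) \<longlongrightarrow> fact n / a ^ (n + 1)) at_top"
proof -
  have "filterlim (\<lambda>t. a * t) at_top at_top"
    using filterlim_tendsto_pos_mult_at_top[OF tendsto_const assms filterlim_ident] .
  then have "((\<lambda>t. poisson_cdf n (a * t)) \<longlongrightarrow> 0) at_top"
    by (rule filterlim_compose[OF poisson_cdf_tendsto_0])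
  then have "((\<lambda>t. fact n / a ^ (n + 1) * (1 - poisson_cdf n (a * t)))
      \<longlongrightarrow> fact n / a ^ (n + 1) * (1 - 0)) at_top"
    by (intro tendsto_mult tendsto_diff tendsto_const)
  moreover have "\<forall>\<^sub>F t in at_top. fact n / a ^ (n + 1) * (1 - poisson_cdf n (a * t))
      = integral {0..t} (\<lambda>s. s ^ n * exp (- a * s))"
    using eventually_ge_at_top[of 0]
    by eventually_elim (intro integral_unique[symmetric] has_integral_power_mult_exp assms)
  ultimately show ?thesis by (simp add: tendsto_cong)
qed

lemma finite_balloon_nodes: "finite (balloon_nodes d b)"
proof -
  have "{Mid i k | i k. i < b \<and> 1 \<le> k \<and> k \<le> d - 1} \<subseteq> (\<lambda>(i, k). Mid i k) ` ({..<b} \<times> {..d})"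
    by auto
  then have "finite {Mid i k | i k. i < b \<and> 1 \<le> k \<and> k \<le> d - 1}"
    by (rule finite_subset) auto
  then show ?thesis
    unfolding balloon_nodes_def by simp
qed

lemma balloon_edge_pos: "balloon_edge d b l v \<Longrightarrow> pos d v = pos d l + 1"
  unfolding balloon_edge_def by auto

lemma balloon_A_triangular:
  "l \<noteq> j \<Longrightarrow> balloon_A d b \<gamma> \<nu> j l \<noteq> 0 \<Longrightarrow> pos d l < pos d j"
  by (auto simp: balloon_A_def split: if_splits dest: balloon_edge_pos)

lemma balloon_A_row_sum:
  assumes "v \<in> balloon_nodes d b"
  shows "(\<Sum>l\<in>balloon_nodes d b. balloon_A d b \<gamma> \<nu> v l * f l)
     = - \<nu> * f v + \<gamma> * (\<Sum>l\<in>{l\<in>balloon_nodes d b. balloon_edge d b l v}. f l)"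
proof -
  let ?N = "balloon_nodes d b"
  have "(\<Sum>l\<in>?N. balloon_A d b \<gamma> \<nu> v l * f l)
     = (\<Sum>l\<in>?N. (if v = l then - \<nu> * f l else 0) + (if balloon_edge d b l v then \<gamma> * f l else 0))"
    by (rule sum.cong) (auto simp: balloon_A_def dest: balloon_edge_pos)
  also have "\<dots> = - \<nu> * f v + (\<Sum>l\<in>{l\<in>?N. balloon_edge d b l v}. \<gamma> * f l)"
    using assms finite_balloon_nodes by (simp add: sum.distrib sum.inter_filter)
  finally show ?thesis by (simp add: sum_distrib_left)
qed

lemma balloon_predecessors_Src: "{l\<in>balloon_nodes d b. balloon_edge d b l Src} = {}"
  by (auto dest: balloon_edge_pos simp: pos_def)

lemma balloon_predecessors_Mid:
  assumes "Mid i k \<in> balloon_nodes d b"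
  shows "{l\<in>balloon_nodes d b. balloon_edge d b l (Mid i k)} = {if k = 1 then Src else Mid i (k - 1)}"
proof -
  have ik: "i < b" "1 \<le> k" "k \<le> d - 1"
    using assms by (auto simp: balloon_nodes_def)
  show ?thesis
  proof (intro equalityI subsetI)
    fix l assume "l \<in> {l\<in>balloon_nodes d b. balloon_edge d b l (Mid i k)}"
    then show "l \<in> {if k = 1 then Src else Mid i (k - 1)}"
      using ik by (cases l) (auto simp: balloon_edge_def pos_def path_of_def balloon_nodes_def)
  next
    fix l assume "l \<in> {if k = 1 then Src else Mid i (k - 1)}"
    then show "l \<in> {l\<in>balloon_nodes d b. balloon_edge d b l (Mid i k)}"
      using ik assms by (auto simp: balloon_edge_def pos_def path_of_def balloon_nodes_def)
  qed
qed

lemma balloon_predecessors_Tgt: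
  assumes "d \<ge> 2"
  shows "{l\<in>balloon_nodes d b. balloon_edge d b l Tgt} = (\<lambda>i. Mid i (d - 1)) ` {..<b}"
proof (intro equalityI subsetI)
  fix l assume "l \<in> {l\<in>balloon_nodes d b. balloon_edge d b l Tgt}"
  then show "l \<in> (\<lambda>i. Mid i (d - 1)) ` {..<b}"
    using assms by (cases l) (auto simp: balloon_edge_def pos_def path_of_def balloon_nodes_def)
next
  fix l assume "l \<in> (\<lambda>i. Mid i (d - 1)) ` {..<b}"
  then show "l \<in> {l\<in>balloon_nodes d b. balloon_edge d b l Tgt}"
    using assms by (auto simp: balloon_edge_def pos_def path_of_def balloon_nodes_def)
qed

definition poisson_term :: "real \<Rightarrow> real \<Rightarrow> nat \<Rightarrow> real \<Rightarrow> real" where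
  "poisson_term \<gamma> \<nu> p s = (\<gamma> * s) ^ p / fact p * exp (- \<nu> * s)"

lemma poisson_term_has_real_derivative:
  "(poisson_term \<gamma> \<nu> p has_real_derivative
     - \<nu> * poisson_term \<gamma> \<nu> p s + (if p = 0 then 0 else \<gamma> * poisson_term \<gamma> \<nu> (p - 1) s)) (at s)"
proof (cases p)
  case 0
  then show ?thesis unfolding poisson_term_def by (auto intro!: derivative_eq_intros)
next
  case (Suc q)
  show ?thesis unfolding poisson_term_def Suc
    by ((rule derivative_eq_intros refl | simp)+) (simp add: field_simps del: fact_Suc)
qed

text \<open>The entries of e^{As} B: the factor in front of the Poisson term is the number of paths
  from v_0 to v.\<close>

definition balloon_impulse :: "nat \<Rightarrow> nat \<Rightarrow> real \<Rightarrow> real \<Rightarrow> node \<Rightarrow> real \<Rightarrow> real" where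
  "balloon_impulse d b \<gamma> \<nu> v s = (if v = Tgt then real b else 1) * poisson_term \<gamma> \<nu> (pos d v) s"

lemma balloon_impulse_has_real_derivative:
  assumes "d \<ge> 2" and v: "v \<in> balloon_nodes d b"
  shows "(balloon_impulse d b \<gamma> \<nu> v has_real_derivative
     (\<Sum>l\<in>balloon_nodes d b. balloon_A d b \<gamma> \<nu> v l * balloon_impulse d b \<gamma> \<nu> l s)) (at s)"
proof -
  let ?g = "balloon_impulse d b \<gamma> \<nu>" and ?c = "if v = Tgt then real b else 1"
  have inflow: "\<gamma> * (\<Sum>l\<in>{l\<in>balloon_nodes d b. balloon_edge d b l v}. ?g l s)
      = ?c * (if pos d v = 0 then 0 else \<gamma> * poisson_term \<gamma> \<nu> (pos d v - 1) s)"
  proof (cases v)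
    case Src
    then show ?thesis by (simp add: balloon_predecessors_Src pos_def)
  next
    case Tgt
    have "inj_on (\<lambda>i. Mid i (d - 1)) {..<b}" by (auto simp: inj_on_def)
    then show ?thesis
      using assms Tgt by (simp add: balloon_predecessors_Tgt sum.reindex balloon_impulse_def pos_def)
  next
    case (Mid i k)
    then have "1 \<le> k" using v by (auto simp: balloon_nodes_def)
    then show ?thesis
      using v Mid by (simp add: balloon_predecessors_Mid balloon_impulse_def pos_def)
  qed
  have "(?g v has_real_derivative ?c * (- \<nu> * poisson_term \<gamma> \<nu> (pos d v) s
      + (if pos d v = 0 then 0 else \<gamma> * poisson_term \<gamma> \<nu> (pos d v - 1) s))) (at s)"
    unfolding balloon_impulse_def[abs_def] by (intro DERIV_cmult poisson_term_has_real_derivative)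
  also have "?c * (- \<nu> * poisson_term \<gamma> \<nu> (pos d v) s
      + (if pos d v = 0 then 0 else \<gamma> * poisson_term \<gamma> \<nu> (pos d v - 1) s))
    = - \<nu> * ?g v s + \<gamma> * (\<Sum>l\<in>{l\<in>balloon_nodes d b. balloon_edge d b l v}. ?g l s)"
    using inflow by (simp add: balloon_impulse_def algebra_simps)
  also have "\<dots> = (\<Sum>l\<in>balloon_nodes d b. balloon_A d b \<gamma> \<nu> v l * ?g l s)"
    using balloon_A_row_sum[OF v] by simp
  finally show ?thesis .
qed

lemma balloon_impulse_at_0:
  assumes "d \<ge> 2" and "v \<in> balloon_nodes d b"
  shows "balloon_impulse d b \<gamma> \<nu> v 0 = driver_B v"
  using assms
  by (cases v) (auto simp: balloon_impulse_def poisson_term_def pos_def driver_B_def balloon_nodes_def)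

lemma balloon_gramian_Tgt_Tgt:
  assumes "d \<ge> 2" and "is_gramian_solution d b \<gamma> \<nu> W" and "t \<ge> 0"
  shows "W t Tgt Tgt = (real b)\<^sup>2 * \<gamma> ^ (2 * d) / (fact d)\<^sup>2
           * integral {0..t} (\<lambda>s. s ^ (2 * d) * exp (- (2 * \<nu>) * s))"
proof -
  let ?N = "balloon_nodes d b" and ?A = "balloon_A d b \<gamma> \<nu>" and ?g = "balloon_impulse d b \<gamma> \<nu>"
  have "lyapunov_solution ?N ?A driver_B W"
    using assms(2) by (simp add: is_gramian_solution_def lyapunov_solution_def)
  moreover have "lyapunov_solution ?N ?A driver_B (\<lambda>t j k. integral {0..t} (\<lambda>s. ?g j s * ?g k s))"
    using assms(1)
    by (intro lyapunov_solution_Gramian finite_balloon_nodes balloon_impulse_has_real_derivative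
        balloon_impulse_at_0)
  ultimately have W_Tgt: "W t Tgt Tgt = integral {0..t} (\<lambda>s. ?g Tgt s * ?g Tgt s)"
    using assms(3)
    by (intro lyapunov_solution_unique[OF finite_balloon_nodes balloon_A_triangular])
      (auto simp: balloon_nodes_def)
  have square: "?g Tgt s * ?g Tgt s
      = (real b)\<^sup>2 * \<gamma> ^ (2 * d) / (fact d)\<^sup>2 * (s ^ (2 * d) * exp (- (2 * \<nu>) * s))" for s
  proof -
    have "exp (- \<nu> * s) * exp (- \<nu> * s) = exp (- (2 * \<nu>) * s)"
      by (simp add: exp_add[symmetric])
    moreover have "(\<gamma> * s) ^ d * (\<gamma> * s) ^ d = \<gamma> ^ (2 * d) * s ^ (2 * d)"
      by (metis mult_2 power_add power_mult_distrib)
    ultimately show ?thesis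
      by (simp add: balloon_impulse_def poisson_term_def pos_def power2_eq_square field_simps)
  qed
  show ?thesis
    by (simp add: W_Tgt square)
qed

theorem mainTheorem2:
  fixes d b :: nat and \<gamma> \<nu> \<beta> :: real
    and W :: "real \<Rightarrow> node \<Rightarrow> node \<Rightarrow> real"
  assumes "d \<ge> 2" and "b \<ge> 1" and "\<gamma> > 0" and "\<nu> > 0"
    and "is_gramian_solution d b \<gamma> \<nu> W"
  shows "((\<lambda>t. W t Tgt Tgt) \<longlongrightarrow>
            (real b)^2 / (2 * \<nu>) * (\<gamma> / (2 * \<nu>))^(2*d) * fact (2*d) / (fact d)^2) at_top
       \<and> ((\<lambda>t. \<beta>^2 / 2 * (1 / W t Tgt Tgt)) \<longlongrightarrow>
            \<beta>^2 / 2 * (2 * \<nu> / (real b)^2) * (2 * \<nu> / \<gamma>)^(2*d) * (fact d)^2 / fact (2*d)) at_top"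
proof -
  define K where "K = (real b)\<^sup>2 * \<gamma> ^ (2 * d) / (fact d)\<^sup>2"
  define L where "L = (real b)^2 / (2 * \<nu>) * (\<gamma> / (2 * \<nu>))^(2*d) * fact (2*d) / (fact d)^2"
  have "((\<lambda>t. K * integral {0..t} (\<lambda>s. s ^ (2 * d) * exp (- (2 * \<nu>) * s)))
      \<longlongrightarrow> K * (fact (2 * d) / (2 * \<nu>) ^ (2 * d + 1))) at_top"
    using \<open>\<nu> > 0\<close> by (intro tendsto_mult_left integral_power_mult_exp_tendsto) simp
  moreover have "K * (fact (2 * d) / (2 * \<nu>) ^ (2 * d + 1)) = L"
    using \<open>\<nu> > 0\<close> by (simp add: K_def L_def power_divide field_simps)
  moreover have "\<forall>\<^sub>F t in at_top.
      W t Tgt Tgt = K * integral {0..t} (\<lambda>s. s ^ (2 * d) * exp (- (2 * \<nu>) * s))"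
    using eventually_ge_at_top[of 0]
    by eventually_elim (simp add: K_def balloon_gramian_Tgt_Tgt[OF assms(1,5)])
  ultimately have lim_W: "((\<lambda>t. W t Tgt Tgt) \<longlongrightarrow> L) at_top"
    by (simp add: tendsto_cong)
  have "L \<noteq> 0"
    using assms(2-4) by (simp add: L_def)
  then have "((\<lambda>t. \<beta>^2 / 2 * (1 / W t Tgt Tgt)) \<longlongrightarrow> \<beta>^2 / 2 * (1 / L)) at_top"
    by (intro tendsto_intros lim_W)
  moreover have "\<beta>^2 / 2 * (1 / L)
      = \<beta>^2 / 2 * (2 * \<nu> / (real b)^2) * (2 * \<nu> / \<gamma>)^(2*d) * (fact d)^2 / fact (2*d)"
    using assms(2-4) by (simp add: L_def power_divide field_simps)
  ultimately show ?thesis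
    using lim_W by (simp add: L_def)
qed

end
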